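(* Let $k\ge2$, $0<a<1$, $d\ge2$, and let $\{\eta_n\}_{n\ge0}\subset\mathbb{C}\setminus\{0\}$ satisfy $|\eta_n|\le a^{d^n}$ for all $n$. Let \[ F_n(z_1,\dots,z_k)=(\eta_n z_k,\ z_2^d+\eta_n z_1,\ \dots,\ z_k^d+\eta_n z_{k-1}). \] Let $R>1+a$, and for $1\le i\le k$ let $V_i=\{z\in\mathbb{C}^k:\|z\|_\infty=|z_i|\ge R\}$, and put $V^+=\bigcup_{i=2}^kV_i$. Then $F_n(V^+)\subset V^+$ for every $n\ge1$.
   Context: $\|z\|_\infty=\max_{1\le i\le k}|z_i|$. *)

theory Defs
  imports Complex_Main
begin

text \<open>Points of C^k are modelled as functions z :: nat \<Rightarrow> complex with coordinates
  z 1, ..., z k and z j = 0 for j outside {1..k}.\<close>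

definition ck :: "nat \<Rightarrow> (nat \<Rightarrow> complex) set" where
  "ck k = {z. \<forall>j. j \<notin> {1..k} \<longrightarrow> z j = 0}"

definition supnorm :: "nat \<Rightarrow> (nat \<Rightarrow> complex) \<Rightarrow> real" where
  "supnorm k z = Max ((\<lambda>i. cmod (z i)) ` {1..k})"

definition Fmap :: "nat \<Rightarrow> nat \<Rightarrow> complex \<Rightarrow> (nat \<Rightarrow> complex) \<Rightarrow> (nat \<Rightarrow> complex)" where
  "Fmap k d c z = (\<lambda>i. if i = 1 then c * z k
                        else if 2 \<le> i \<and> i \<le> k then z i ^ d + c * z (i - 1)
                        else 0)"

definition Vset :: "nat \<Rightarrow> real \<Rightarrow> nat \<Rightarrow> (nat \<Rightarrow> complex) set" where
  "Vset k R i = {z \<in> ck k. supnorm k z = cmod (z i) \<and> cmod (z i) \<ge> R}"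

definition Vplus :: "nat \<Rightarrow> real \<Rightarrow> (nat \<Rightarrow> complex) set" where
  "Vplus k R = (\<Union>i\<in>{2..k}. Vset k R i)"

end

theory Submission
  imports Defs
begin

text \<open>Let \<open>z \<in> V\<^sub>i\<close> with \<open>i \<ge> 2\<close> and \<open>M = \<parallel>z\<parallel>\<^sub>\<infinity> = |z\<^sub>i| \<ge> R\<close>, and let \<open>w = F\<^sub>n(z)\<close>.
  Since \<open>|\<eta>\<^sub>n| \<le> a < 1\<close>, the \<open>d\<close>-th power dominates:
  \<open>|w\<^sub>i| \<ge> M\<^sup>d - |\<eta>\<^sub>n| M \<ge> M (M - |\<eta>\<^sub>n|) > M\<close>, whereas \<open>|w\<^sub>1| = |\<eta>\<^sub>n z\<^sub>k| \<le> M\<close>.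
  Hence the sup-norm of \<open>w\<close> is attained at some coordinate \<open>j \<ge> 2\<close>, with value at least
  \<open>|w\<^sub>i| > R\<close>, i.e. \<open>w \<in> V\<^sub>j\<close>.\<close>

lemma supnorm_ge:
  assumes "l \<in> {1..k}"
  shows "cmod (z l) \<le> supnorm k z"
  unfolding supnorm_def using assms by (intro Max_ge) auto

lemma supnorm_attained:
  assumes "k \<ge> 1"
  obtains j where "j \<in> {1..k}" and "supnorm k z = cmod (z j)"
proof -
  have "supnorm k z \<in> (\<lambda>i. cmod (z i)) ` {1..k}"
    unfolding supnorm_def using assms by (intro Max_in) auto
  then show thesis using that by auto
qed

lemma Vplus_memI:
  assumes "w \<in> ck k" and "i \<in> {2..k}"
    and "cmod (w 1) < cmod (w i)" and "R \<le> cmod (w i)"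
  shows "w \<in> Vplus k R"
proof -
  obtain j where j: "j \<in> {1..k}" and sup: "supnorm k w = cmod (w j)"
    using supnorm_attained[of k w] assms(2) by auto
  have wij: "cmod (w i) \<le> cmod (w j)"
    using supnorm_ge[of i k w] assms(2) sup by auto
  then have "j \<noteq> 1" using assms(3) by auto
  with j have "j \<in> {2..k}" by auto
  moreover have "w \<in> Vset k R j"
    unfolding Vset_def using assms(1,4) sup wij by auto
  ultimately show ?thesis unfolding Vplus_def by auto
qed

lemma Fmap_in_ck:
  assumes "k \<ge> 1"
  shows "Fmap k d c z \<in> ck k"
  using assms unfolding ck_def Fmap_def by auto

lemma norm_Fmap_first_le:
  assumes "k \<ge> 1"
  shows "cmod (Fmap k d c z 1) \<le> cmod c * supnorm k z"
  using supnorm_ge[of k k z] assms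
  by (simp add: Fmap_def norm_mult mult_left_mono)

lemma norm_Fmap_ge:
  assumes "i \<in> {2..k}"
  shows "cmod (z i) ^ d - cmod c * supnorm k z \<le> cmod (Fmap k d c z i)"
proof -
  have "i - 1 \<in> {1..k}" using assms by auto
  then have "cmod (c * z (i - 1)) \<le> cmod c * supnorm k z"
    using supnorm_ge[of "i - 1" k z] assms by (simp add: norm_mult mult_left_mono)
  moreover have "cmod (z i ^ d) - cmod (c * z (i - 1)) \<le> cmod (z i ^ d + c * z (i - 1))"
    using norm_diff_ineq[of "z i ^ d" "c * z (i - 1)"] by simp
  ultimately show ?thesis
    using assms by (simp add: Fmap_def norm_power)
qed

lemma power_minus_linear_gt:
  fixes M b :: real
  assumes "M > 1 + b" and "b \<ge> 0" and "d \<ge> 2"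
  shows "M < M ^ d - b * M"
proof -
  have "M * 1 < M * (M - b)"
    using assms(1,2) by (intro mult_strict_left_mono) auto
  also have "\<dots> = M ^ 2 - b * M"
    by (simp add: power2_eq_square algebra_simps)
  also have "\<dots> \<le> M ^ d - b * M"
    using assms by (simp add: power_increasing)
  finally show ?thesis by simp
qed

lemma Fmap_Vplus_subset:
  assumes "k \<ge> 2" and "d \<ge> 2" and "cmod c \<le> 1" and "R > 1 + cmod c"
  shows "Fmap k d c ` Vplus k R \<subseteq> Vplus k R"
proof
  fix w assume "w \<in> Fmap k d c ` Vplus k R"
  then obtain z i where w: "w = Fmap k d c z" and i: "i \<in> {2..k}" and "z \<in> Vset k R i"
    unfolding Vplus_def by auto
  then have sup: "supnorm k z = cmod (z i)" and MR: "R \<le> cmod (z i)"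
    unfolding Vset_def by auto
  have "cmod (z i) < cmod (w i)"
    using power_minus_linear_gt[of "cmod c" "cmod (z i)" d] norm_Fmap_ge[OF i, of z d c]
      assms(2,4) MR sup w by auto
  moreover have "cmod (w 1) \<le> cmod (z i)"
    using norm_Fmap_first_le[of k d c z] mult_left_le_one_le[of "cmod (z i)" "cmod c"]
      assms(1,3) sup w by auto
  moreover have "w \<in> ck k" using Fmap_in_ck assms(1) w by simp
  ultimately show "w \<in> Vplus k R" using Vplus_memI[OF _ i] MR by fastforce
qed

theorem lemma3p4:
  fixes k d :: nat and a R :: real and eta :: "nat \<Rightarrow> complex"
  assumes "k \<ge> 2" and "0 < a" and "a < 1" and "d \<ge> 2"
    and "\<And>n. eta n \<noteq> 0"
    and "\<And>n. cmod (eta n) \<le> a ^ (d ^ n)"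
    and "R > 1 + a"
  shows "\<forall>n\<ge>1. Fmap k d (eta n) ` Vplus k R \<subseteq> Vplus k R"
proof (intro allI impI)
  fix n :: nat
  have "a ^ (d ^ n) \<le> a ^ 1"
    using assms(2,3,4) by (intro power_decreasing) auto
  then have "cmod (eta n) \<le> a" using assms(6)[of n] by simp
  then show "Fmap k d (eta n) ` Vplus k R \<subseteq> Vplus k R"
    using Fmap_Vplus_subset assms(1,3,4,7) by simp
qed

end
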